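(* Let $a,b,c,d>0$, $\theta>0$ satisfy $-(\theta a+\theta^2 b)<(\theta-1)(\theta+1)^2<\theta c+\theta^2 d$, and consider on $\mathcal{I}=[0,1]^2$ the system $$\dot x=x(1-x)\big[xr(-c+d-a+b)+x(a-b)-r(d+b)+b\big]+\mu(1-2x),\qquad \dot r=r(1-r)\big[\theta x-(1-x)\big].$$ Then for every $\mu\in(0,1]$ the boundary $\partial\mathcal{I}$ is repelling.
   Context: The boundary $\partial\mathcal{I}$ is the union of the four sides $\mathcal{B}_t=\{r=1\}$, $\mathcal{B}_b=\{r=0\}$, $\mathcal{B}_l=\{x=0\}$, $\mathcal{B}_r=\{x=1\}$ of the square. The boundary is called repelling if there is $\delta>0$ such that every solution $(x(t),r(t))$ with initial condition in the open square $(0,1)^2$ satisfies $\liminf_{t\to\infty}\operatorname{dist}((x(t),r(t)),\partial\mathcal{I})>\delta$, i.e. trajectories starting in the interior eventually stay a uniform positive distance away from the boundary. *)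

theory Defs
  imports "HOL-Analysis.Analysis"
begin

definition fx :: "real \<Rightarrow> real \<Rightarrow> real \<Rightarrow> real \<Rightarrow> real \<Rightarrow> real \<Rightarrow> real \<Rightarrow> real" where
  "fx a b c d \<mu> x r =
     x * (1 - x) * (x * r * (- c + d - a + b) + x * (a - b) - r * (d + b) + b) + \<mu> * (1 - 2 * x)"

definition fr :: "real \<Rightarrow> real \<Rightarrow> real \<Rightarrow> real" where
  "fr \<theta> x r = r * (1 - r) * (\<theta> * x - (1 - x))"

definition is_solution ::
  "real \<Rightarrow> real \<Rightarrow> real \<Rightarrow> real \<Rightarrow> real \<Rightarrow> real \<Rightarrow> (real \<Rightarrow> real) \<Rightarrow> (real \<Rightarrow> real) \<Rightarrow> bool" where
  "is_solution a b c d \<theta> \<mu> x r \<longleftrightarrow>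
     (\<forall>t\<ge>0. (x has_real_derivative fx a b c d \<mu> (x t) (r t)) (at t within {0..})
            \<and> (r has_real_derivative fr \<theta> (x t) (r t)) (at t within {0..}))"

definition square_boundary :: "(real \<times> real) set" where
  "square_boundary =
     {p. snd p = 1 \<and> fst p \<in> {0..1}} \<union> {p. snd p = 0 \<and> fst p \<in> {0..1}} \<union>
     {p. fst p = 0 \<and> snd p \<in> {0..1}} \<union> {p. fst p = 1 \<and> snd p \<in> {0..1}}"

definition boundary_repelling :: "real \<Rightarrow> real \<Rightarrow> real \<Rightarrow> real \<Rightarrow> real \<Rightarrow> real \<Rightarrow> bool" where
  "boundary_repelling a b c d \<theta> \<mu> \<longleftrightarrow>
     (\<exists>\<delta>>0. \<forall>x r. is_solution a b c d \<theta> \<mu> x r \<longrightarrow>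
        x 0 \<in> {0<..<1} \<longrightarrow> r 0 \<in> {0<..<1} \<longrightarrow>
        Liminf at_top (\<lambda>t. ereal (infdist (x t, r t) square_boundary)) > ereal \<delta>)"

end

theory Submission
  imports Defs
begin

(* The open square is invariant: near each side the field vanishes at most linearly in the
   distance to that side, so each of x, 1 - x, r, 1 - r decays at most exponentially.
   Near x = 0 and x = 1 the term \<mu>(1 - 2x) pushes x inwards at speed at least \<mu>/2.
   Near r = 0 the x-equation is close to the edge drift x(1 - x)(xa + (1 - x)b) + \<mu>(1 - 2x),
   which the first hypothesis makes positive at the r-nullcline x = 1/(1 + \<theta>) and hence on
   [0, X] for some X beyond it. A trajectory in a thin strip above r = 0 is therefore carried
   past X in bounded time, while r decays at most exponentially, and beyond X the variable r
   grows; this bounds r from below uniformly. The side r = 1 is the side r = 0 of the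
   reflected system (x, r) \<mapsto> (1 - x, 1 - r), which has parameters (d, c, b, a, 1/\<theta>) and an
   r-equation sped up by \<theta>; the second hypothesis is the first one for these parameters. *)

lemma DERIV_at_of_within_atLeast:
  assumes "(f has_real_derivative D) (at t within {0..})" "0 < t"
  shows "(f has_real_derivative D) (at t)"
proof -
  have "(f has_real_derivative D) (at t within {0<..})"
    using assms(1) by (rule DERIV_subset) auto
  moreover have "at t within {0<..} = at t"
    using assms(2) by (intro at_within_open) auto
  ultimately show ?thesis by simp
qed

lemma continuous_on_atLeast_of_DERIV:
  assumes "\<forall>t\<ge>0. (f has_real_derivative f' t) (at t within {0..})"
  shows "continuous_on {0..} f"
  unfolding continuous_on_eq_continuous_within
  using assms DERIV_continuous by (metis atLeast_iff)

lemma le_of_deriv_nonneg: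
  assumes d: "\<forall>t\<ge>0. (f has_real_derivative f' t) (at t within {0..})"
    and "0 \<le> s" "s \<le> t" and nonneg: "\<And>u. s < u \<Longrightarrow> u < t \<Longrightarrow> 0 \<le> f' u"
  shows "f s \<le> f t"
proof (rule DERIV_nonneg_imp_increasing_open[OF \<open>s \<le> t\<close>])
  fix u assume "s < u" "u < t"
  then show "\<exists>y. (f has_real_derivative y) (at u) \<and> 0 \<le> y"
    using DERIV_at_of_within_atLeast[of f "f' u" u] d nonneg \<open>0 \<le> s\<close> by auto
next
  show "continuous_on {s..t} f"
    using continuous_on_atLeast_of_DERIV[OF d]
    by (rule continuous_on_subset) (use \<open>0 \<le> s\<close> in auto)
qed

lemma exp_lower_bound_of_deriv_ge:
  assumes d: "\<forall>t\<ge>0. (f has_real_derivative f' t) (at t within {0..})"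
    and "0 \<le> s" "s \<le> t" and ge: "\<And>u. s < u \<Longrightarrow> u < t \<Longrightarrow> c * f u \<le> f' u"
  shows "f s * exp (c * (t - s)) \<le> f t"
proof -
  have "\<forall>u\<ge>0. ((\<lambda>u. f u * exp (- c * u)) has_real_derivative
      (f' u - c * f u) * exp (- c * u)) (at u within {0..})"
    using d by (auto intro!: derivative_eq_intros simp: algebra_simps)
  then have "f s * exp (- c * s) \<le> f t * exp (- c * t)"
    by (rule le_of_deriv_nonneg[OF _ assms(2,3)]) (use ge in force)
  then have "f s * exp (- c * s) * exp (c * t) \<le> f t * exp (- c * t) * exp (c * t)"
    by (simp add: mult_right_mono)
  then show ?thesis
    by (simp add: mult.assoc algebra_simps flip: exp_add)
qed

lemma linear_lower_bound_of_deriv_ge: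
  assumes d: "\<forall>t\<ge>0. (f has_real_derivative f' t) (at t within {0..})"
    and "0 \<le> s" "s \<le> t" and ge: "\<And>u. s < u \<Longrightarrow> u < t \<Longrightarrow> m \<le> f' u"
  shows "f s + m * (t - s) \<le> f t"
proof -
  have "\<forall>u\<ge>0. ((\<lambda>u. f u - m * u) has_real_derivative (f' u - m)) (at u within {0..})"
    using d by (auto intro!: derivative_eq_intros)
  then have "f s - m * s \<le> f t - m * t"
    by (rule le_of_deriv_nonneg[OF _ assms(2,3)]) (use ge in force)
  then show ?thesis by (simp add: algebra_simps)
qed

lemma last_time_above:
  fixes f :: "real \<Rightarrow> real"
  assumes "continuous_on {s..t} f" "s \<le> t" "c \<le> f s"
  obtains t1 where "t1 \<in> {s..t}" "c \<le> f t1" "\<And>u. t1 < u \<Longrightarrow> u \<le> t \<Longrightarrow> f u < c"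
proof -
  define S where "S = {s..t} \<inter> f -` {c..}"
  have "closed S"
    unfolding S_def by (rule continuous_closed_preimage[OF assms(1)]) auto
  moreover have "S \<noteq> {}" "bdd_above S"
    using assms unfolding S_def by (auto intro: bdd_aboveI[of _ t])
  ultimately have "Sup S \<in> S" by (intro closed_contains_Sup)
  moreover have "f u < c" if "Sup S < u" "u \<le> t" for u
    using cSup_upper[OF _ \<open>bdd_above S\<close>, of u] that \<open>Sup S \<in> S\<close> unfolding S_def by force
  ultimately show ?thesis using that unfolding S_def by auto
qed

lemma stays_above_of_deriv_nonneg_below:
  assumes d: "\<forall>t\<ge>0. (f has_real_derivative f' t) (at t within {0..})"
    and "0 \<le> s" "s \<le> t" "X \<le> f s"
    and nonneg: "\<And>u. s < u \<Longrightarrow> u < t \<Longrightarrow> f u < X \<Longrightarrow> 0 \<le> f' u"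
  shows "X \<le> f t"
proof (rule ccontr)
  assume "\<not> X \<le> f t"
  moreover have "continuous_on {s..t} f"
    using continuous_on_atLeast_of_DERIV[OF d]
    by (rule continuous_on_subset) (use \<open>0 \<le> s\<close> in auto)
  then obtain t1 where t1: "t1 \<in> {s..t}" "X \<le> f t1" "\<And>u. t1 < u \<Longrightarrow> u \<le> t \<Longrightarrow> f u < X"
    using last_time_above \<open>s \<le> t\<close> \<open>X \<le> f s\<close> by blast
  have "f t1 \<le> f t"
    by (rule le_of_deriv_nonneg[OF d]) (use t1 \<open>0 \<le> s\<close> nonneg in auto)
  ultimately show False using t1 by auto
qed

lemma reaches_level_of_deriv_ge:
  assumes d: "\<forall>t\<ge>0. (f has_real_derivative f' t) (at t within {0..})"
    and "0 \<le> s" "0 \<le> f s" "0 < m" "0 \<le> X"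
    and ge: "\<And>u. s < u \<Longrightarrow> u < s + X / m \<Longrightarrow> f u < X \<Longrightarrow> m \<le> f' u"
  obtains s' where "s' \<in> {s..s + X / m}" "X \<le> f s'"
proof -
  have "\<exists>s'\<in>{s..s + X / m}. X \<le> f s'"
  proof (rule ccontr)
    assume "\<not> ?thesis"
    then have below: "\<And>u. s \<le> u \<Longrightarrow> u \<le> s + X / m \<Longrightarrow> f u < X" by force
    have "f s + m * (s + X / m - s) \<le> f (s + X / m)"
      by (rule linear_lower_bound_of_deriv_ge[OF d]) (use assms below in auto)
    then show False using below[of "s + X / m"] assms by auto
  qed
  then show ?thesis using that by blast
qed

lemma eventually_ge_of_deriv_ge_below:
  assumes d: "\<forall>t\<ge>0. (f has_real_derivative f' t) (at t within {0..})"
    and "\<forall>t\<ge>0. 0 \<le> f t" "0 < m" "0 \<le> X"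
    and ge: "\<And>t. 0 \<le> t \<Longrightarrow> f t < X \<Longrightarrow> m \<le> f' t"
  shows "eventually (\<lambda>t. X \<le> f t) at_top"
proof -
  obtain s where s: "s \<in> {0..X / m}" "X \<le> f s"
    using reaches_level_of_deriv_ge[OF d, of 0 m X] assms by auto
  have "X \<le> f t" if "s \<le> t" for t
  proof (rule stays_above_of_deriv_nonneg_below[OF d _ that s(2)])
    fix u assume "s < u" "f u < X"
    then show "0 \<le> f' u" using ge[of u] s \<open>0 < m\<close> by auto
  qed (use s in auto)
  then show ?thesis unfolding eventually_at_top_linorder by blast
qed

locale trapping_strip =
  fixes x r x' r' :: "real \<Rightarrow> real" and \<eta> m k L X :: real
  assumes dx: "\<forall>t\<ge>0. (x has_real_derivative x' t) (at t within {0..})"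
    and dr: "\<forall>t\<ge>0. (r has_real_derivative r' t) (at t within {0..})"
    and r_pos: "\<And>t. 0 \<le> t \<Longrightarrow> 0 < r t"
    and x_nonneg: "\<And>t. 0 \<le> t \<Longrightarrow> 0 \<le> x t"
    and \<eta>_pos: "0 < \<eta>" and m_pos: "0 < m" and k_pos: "0 < k"
    and L_nonneg: "0 \<le> L" and X_nonneg: "0 \<le> X"
    and drift: "\<And>t. 0 \<le> t \<Longrightarrow> r t \<le> \<eta> \<Longrightarrow> x t < X \<Longrightarrow> m \<le> x' t"
    and growth: "\<And>t. 0 \<le> t \<Longrightarrow> r t \<le> \<eta> \<Longrightarrow> X \<le> x t \<Longrightarrow> k * r t \<le> r' t"
    and decay: "\<And>t. 0 \<le> t \<Longrightarrow> - L * r t \<le> r' t"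
begin

lemma reaches_X:
  assumes "0 \<le> s" and low: "\<And>u. s < u \<Longrightarrow> u < s + X / m \<Longrightarrow> r u \<le> \<eta>"
  obtains s' where "s' \<in> {s..s + X / m}" "X \<le> x s'"
proof (rule reaches_level_of_deriv_ge[OF dx assms(1) x_nonneg[OF assms(1)] m_pos X_nonneg])
  fix u assume "s < u" "u < s + X / m" "x u < X"
  then show "m \<le> x' u" using drift[of u] low[of u] assms(1) by auto
qed (use that in auto)

lemma stays_beyond_X:
  assumes "0 \<le> s" "s \<le> t" "X \<le> x s" and low: "\<And>u. s < u \<Longrightarrow> u < t \<Longrightarrow> r u \<le> \<eta>"
  shows "X \<le> x t"
proof (rule stays_above_of_deriv_nonneg_below[OF dx assms(1-3)])
  fix u assume "s < u" "u < t" "x u < X"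
  then show "0 \<le> x' u" using drift[of u] low m_pos \<open>0 \<le> s\<close> by force
qed

lemma grows_beyond_X:
  assumes "0 \<le> s" "s \<le> t" "X \<le> x s" and low: "\<And>u. s < u \<Longrightarrow> u < t \<Longrightarrow> r u \<le> \<eta>"
  shows "r s * exp (k * (t - s)) \<le> r t"
proof (rule exp_lower_bound_of_deriv_ge[OF dr assms(1,2)])
  fix u assume "s < u" "u < t"
  then show "k * r u \<le> r' u"
    using growth stays_beyond_X[OF assms(1) _ assms(3)] low \<open>0 \<le> s\<close> by force
qed

lemma leaves_strip: "\<exists>s\<ge>0. \<eta> \<le> r s"
proof (rule ccontr)
  assume "\<not> ?thesis"
  then have low: "\<And>t. 0 \<le> t \<Longrightarrow> r t \<le> \<eta>" by force
  obtain s where s: "0 \<le> s" "X \<le> x s"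
    using reaches_X[of 0] low by force
  define t where "t = s + \<eta> / (k * r s)"
  have "0 < r s" using r_pos s(1) by simp
  then have "s \<le> t" using \<eta>_pos k_pos by (simp add: t_def)
  have "r s * (1 + k * (t - s)) \<le> r s * exp (k * (t - s))"
    using \<open>0 < r s\<close> exp_ge_add_one_self by simp
  also have "\<dots> \<le> r t"
    using grows_beyond_X[OF s(1) \<open>s \<le> t\<close> s(2)] low s(1) by force
  finally have "r s * (1 + k * (t - s)) \<le> r t" .
  moreover have "r s * (1 + k * (t - s)) = r s + \<eta>"
    using \<open>0 < r s\<close> k_pos by (simp add: t_def field_simps)
  ultimately have "r s + \<eta> \<le> r t" by simp
  then show False
    using low[of t] \<open>0 < r s\<close> \<open>s \<le> t\<close> s(1) by auto
qed

lemma excursion_lower_bound: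
  assumes "0 \<le> s" "s \<le> t" and low: "\<And>u. s < u \<Longrightarrow> u < t \<Longrightarrow> r u \<le> \<eta>"
  shows "r s * exp (- L * (X / m)) \<le> r t"
proof (cases "t \<le> s + X / m")
  case True
  then have "L * (t - s) \<le> L * (X / m)"
    using L_nonneg by (intro mult_left_mono) auto
  then have "exp (- L * (X / m)) \<le> exp (- L * (t - s))" by simp
  then have "r s * exp (- L * (X / m)) \<le> r s * exp (- L * (t - s))"
    using r_pos[OF \<open>0 \<le> s\<close>] by simp
  also have "\<dots> \<le> r t"
    by (rule exp_lower_bound_of_deriv_ge[OF dr assms(1,2)]) (use decay \<open>0 \<le> s\<close> in force)
  finally show ?thesis .
next
  case False
  obtain s' where s': "s' \<in> {s..s + X / m}" "X \<le> x s'"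
    using reaches_X[OF \<open>0 \<le> s\<close>] low False by force
  have "L * (s' - s) \<le> L * (X / m)"
    using L_nonneg s' by (intro mult_left_mono) auto
  then have "exp (- L * (X / m)) \<le> exp (- L * (s' - s))" by simp
  then have "r s * exp (- L * (X / m)) \<le> r s * exp (- L * (s' - s))"
    using r_pos[OF \<open>0 \<le> s\<close>] by simp
  also have "\<dots> \<le> r s'"
    by (rule exp_lower_bound_of_deriv_ge[OF dr \<open>0 \<le> s\<close>]) (use decay s' \<open>0 \<le> s\<close> in force)+
  also have "\<dots> \<le> r s' * exp (k * (t - s'))"
    using r_pos[of s'] s' False k_pos \<open>0 \<le> s\<close> by auto
  also have "\<dots> \<le> r t"
    by (rule grows_beyond_X) (use s' False low \<open>0 \<le> s\<close> in auto)
  finally show ?thesis .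
qed

lemma eventually_above:
  "eventually (\<lambda>t. \<eta> * exp (- L * (X / m)) \<le> r t) at_top"
proof -
  obtain s0 where s0: "0 \<le> s0" "\<eta> \<le> r s0" using leaves_strip by blast
  have "\<eta> * exp (- L * (X / m)) \<le> r t" if st: "s0 \<le> t" for t
  proof (cases "\<eta> \<le> r t")
    case True
    have "exp (- L * (X / m)) \<le> 1"
      using L_nonneg X_nonneg m_pos by simp
    then have "\<eta> * exp (- L * (X / m)) \<le> \<eta>"
      using \<eta>_pos by (simp add: mult_left_le)
    then show ?thesis using True by simp
  next
    case False
    have cont: "continuous_on {s0..t} r"
      using continuous_on_atLeast_of_DERIV[OF dr]
      by (rule continuous_on_subset) (use s0 in auto)
    obtain s where s: "s \<in> {s0..t}" "\<eta> \<le> r s" "\<And>u. s < u \<Longrightarrow> u \<le> t \<Longrightarrow> r u < \<eta>"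
      using last_time_above[OF cont st s0(2)] by blast
    have "\<eta> * exp (- L * (X / m)) \<le> r s * exp (- L * (X / m))"
      using s(2) by simp
    also have "\<dots> \<le> r t"
      by (rule excursion_lower_bound) (use s s0 in \<open>auto simp: less_imp_le\<close>)
    finally show ?thesis .
  qed
  then show ?thesis unfolding eventually_at_top_linorder by blast
qed

end

(* fx on the edge r = 0 is edge_drift a b; after reflection the edge r = 1 gives edge_drift d c. *)
definition edge_drift :: "real \<Rightarrow> real \<Rightarrow> real \<Rightarrow> real \<Rightarrow> real" where
  "edge_drift A B \<mu> x = x * (1 - x) * (x * A + (1 - x) * B) + \<mu> * (1 - 2 * x)"

(* Cross-multiplied forms of the decrease of u^2(1 - u)/(2u - 1) and u(1 - u)^2/(2u - 1)
   on (1/2, 1]. *)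
lemma cubic_ratio_antimono1:
  fixes y z :: real
  assumes "1/2 < y" "y \<le> z"
  shows "z^2 * (1 - z) * (2*y - 1) \<le> y^2 * (1 - y) * (2*z - 1)"
proof -
  define w where "w = y + z"
  define Q where "Q = w - w^2 + y*z*(2*w - 1)"
  have "w/2 - 1/4 \<le> y*z"
    using mult_nonneg_nonneg[of "y - 1/2" "z - 1/2"] assms unfolding w_def by (simp add: algebra_simps)
  then have "(w/2 - 1/4)*(2*w - 1) \<le> y*z*(2*w - 1)"
    using assms by (intro mult_right_mono) (auto simp: w_def)
  then have "0 \<le> Q"
    unfolding Q_def by (simp add: algebra_simps power2_eq_square)
  then have "0 \<le> (z - y) * Q" using assms by simp
  also have "(z - y) * Q = y^2 * (1 - y) * (2*z - 1) - z^2 * (1 - z) * (2*y - 1)"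
    unfolding Q_def w_def by (simp add: algebra_simps power2_eq_square)
  finally show ?thesis by simp
qed

lemma cubic_ratio_antimono2:
  fixes y z :: real
  assumes "1/2 < y" "y \<le> z" "z \<le> 1"
  shows "z * (1 - z)^2 * (2*y - 1) \<le> y * (1 - y)^2 * (2*z - 1)"
proof -
  define w where "w = y + z"
  define Q where "Q = (w - 1)^2 + y*z*(3 - 2*w)"
  have "0 \<le> Q"
  proof (cases "w \<le> 3/2")
    case True
    then show ?thesis using assms unfolding Q_def by simp
  next
    case False
    have "y*z \<le> w^2/4"
      using zero_le_power2[of "y - z"] unfolding w_def by (simp add: algebra_simps power2_eq_square)
    then have "y*z*(2*w - 3) \<le> w^2/4*(2*w - 3)"
      using False by (intro mult_right_mono) auto
    moreover have "(w - 1)^2 - w^2/4*(2*w - 3) = (2 - w) * (2*(w - 3/4)^2 + 7/8) / 4"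
      by (simp add: algebra_simps power2_eq_square)
    moreover have "0 \<le> (2 - w) * (2*(w - 3/4)^2 + 7/8) / 4"
      using assms unfolding w_def by simp
    ultimately have "y*z*(2*w - 3) \<le> (w - 1)^2" by linarith
    then show ?thesis unfolding Q_def by (simp add: algebra_simps)
  qed
  then have "0 \<le> (z - y) * Q" using assms by simp
  also have "(z - y) * Q = y * (1 - y)^2 * (2*z - 1) - z * (1 - z)^2 * (2*y - 1)"
    unfolding Q_def w_def by (simp add: algebra_simps power2_eq_square)
  finally show ?thesis by simp
qed

(* For u > 1/2, edge_drift u > 0 says that a positive combination of these two ratios
   exceeds \<mu>. *)
lemma edge_drift_pos_of_le:
  assumes "0 < A" "0 < B" "0 < \<mu>" "0 \<le> y" "y \<le> z" "z \<le> 1" "0 < edge_drift A B \<mu> z"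
  shows "0 < edge_drift A B \<mu> y"
proof (cases "y \<le> 1/2")
  case True
  show ?thesis
  proof (cases "y = 1/2")
    case True
    then show ?thesis using assms unfolding edge_drift_def True by simp
  next
    case False
    have "0 \<le> y * (1 - y) * (y * A + (1 - y) * B)"
      using assms \<open>y \<le> 1/2\<close> by (intro mult_nonneg_nonneg add_nonneg_nonneg) auto
    moreover have "0 < \<mu> * (1 - 2 * y)"
      using assms \<open>y \<le> 1/2\<close> False by simp
    ultimately show ?thesis unfolding edge_drift_def by linarith
  qed
next
  case False
  define p where "p u = A * (u^2 * (1 - u)) + B * (u * (1 - u)^2)" for u
  have p: "edge_drift A B \<mu> u = p u - \<mu> * (2*u - 1)" for u
    unfolding edge_drift_def p_def by (simp add: algebra_simps power2_eq_square)
  have y: "1/2 < y" using False by simp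
  have "p z * (2*y - 1) \<le> p y * (2*z - 1)"
    using mult_left_mono[OF cubic_ratio_antimono1[OF y \<open>y \<le> z\<close>], of A]
      mult_left_mono[OF cubic_ratio_antimono2[OF y \<open>y \<le> z\<close> \<open>z \<le> 1\<close>], of B] assms
    unfolding p_def by (simp add: algebra_simps)
  moreover have "\<mu> * (2*z - 1) * (2*y - 1) < p z * (2*y - 1)"
    using assms(7) p[of z] y by simp
  ultimately have "(\<mu> * (2*y - 1)) * (2*z - 1) < p y * (2*z - 1)"
    by (simp add: algebra_simps)
  then have "\<mu> * (2*y - 1) < p y"
    by (rule mult_right_less_imp_less) (use y \<open>y \<le> z\<close> in simp)
  then show ?thesis using p[of y] by simp
qed

lemma edge_drift_bounded_below_beyond:
  assumes "0 < A" "0 < B" "0 < \<mu>" "0 < z" "z < 1" "0 < edge_drift A B \<mu> z"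
  obtains X m where "z < X" "X < 1" "0 < m" "\<And>y. y \<in> {0..X} \<Longrightarrow> m \<le> edge_drift A B \<mu> y"
proof -
  have cont: "continuous_on UNIV (edge_drift A B \<mu>)"
    unfolding edge_drift_def by (intro continuous_intros)
  have "(edge_drift A B \<mu> \<longlongrightarrow> edge_drift A B \<mu> z) (at_right z)"
    unfolding edge_drift_def by (intro tendsto_intros)
  then have "eventually (\<lambda>y. 0 < edge_drift A B \<mu> y) (at_right z)"
    using assms(6) by (rule order_tendstoD(1))
  moreover have "eventually (\<lambda>y. y \<in> {z<..<1}) (at_right z)"
    using assms(5) by (rule eventually_at_right_real)
  ultimately have "\<exists>X. 0 < edge_drift A B \<mu> X \<and> X \<in> {z<..<1}"
    by (intro eventually_happens' eventually_conj) auto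
  then obtain X where X: "z < X" "X < 1" "0 < edge_drift A B \<mu> X" by auto
  have pos: "0 < edge_drift A B \<mu> y" if "y \<in> {0..X}" for y
    using edge_drift_pos_of_le[OF assms(1-3) _ _ _ X(3)] that X by auto
  have "continuous_on {0..X} (edge_drift A B \<mu>)"
    using continuous_on_subset[OF cont] by blast
  moreover have "{0..X} \<noteq> {}" using X assms(4) by simp
  ultimately obtain y0 where "y0 \<in> {0..X}" "\<forall>y\<in>{0..X}. edge_drift A B \<mu> y0 \<le> edge_drift A B \<mu> y"
    using continuous_attains_inf[OF compact_Icc] by blast
  then show ?thesis using that X pos by blast
qed

(* 1/(1 + \<phi>) is the r-nullcline, where \<phi>x - (1 - x) changes sign. *)
lemma edge_drift_pos_at_balance:
  assumes "0 < A" "0 < B" "0 < \<phi>" "0 < \<mu>" "\<mu> \<le> 1"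
    and balance: "- (\<phi> * A + \<phi>^2 * B) < (\<phi> - 1) * (\<phi> + 1)^2"
  shows "0 < edge_drift A B \<mu> (1 / (1 + \<phi>))"
proof -
  have "edge_drift A B \<mu> (1 / (1 + \<phi>))
      = (\<phi> * A + \<phi>^2 * B + \<mu> * ((\<phi> - 1) * (\<phi> + 1)^2)) / (1 + \<phi>)^3"
    using assms(3) unfolding edge_drift_def
    by (simp add: divide_simps) (simp add: algebra_simps power2_eq_square power3_eq_cube)
  moreover have "0 < \<phi> * A + \<phi>^2 * B + \<mu> * ((\<phi> - 1) * (\<phi> + 1)^2)"
  proof (cases "\<phi> < 1")
    case True
    then have "1 * ((\<phi> - 1) * (\<phi> + 1)^2) \<le> \<mu> * ((\<phi> - 1) * (\<phi> + 1)^2)"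
      using assms(5) by (intro mult_right_mono_neg) (auto intro: mult_nonpos_nonneg)
    then show ?thesis using balance by linarith
  next
    case False
    then have "0 \<le> \<mu> * ((\<phi> - 1) * (\<phi> + 1)^2)" using assms(4) by simp
    moreover have "0 < \<phi> * A + \<phi>^2 * B" using assms by (intro add_pos_pos) auto
    ultimately show ?thesis by linarith
  qed
  ultimately show ?thesis using assms(3) by simp
qed

lemma balance_reflect:
  fixes \<theta> c d :: real
  assumes "0 < \<theta>" "(\<theta> - 1) * (\<theta> + 1)^2 < \<theta> * c + \<theta>^2 * d"
  shows "- (1 / \<theta> * d + (1 / \<theta>)^2 * c) < (1 / \<theta> - 1) * (1 / \<theta> + 1)^2"
proof -
  have "(1 / \<theta> - 1) * (1 / \<theta> + 1)^2 + (1 / \<theta> * d + (1 / \<theta>)^2 * c)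
      = (\<theta> * c + \<theta>^2 * d - (\<theta> - 1) * (\<theta> + 1)^2) / \<theta>^3"
    using assms(1) by (simp add: field_simps power2_eq_square power3_eq_cube)
  also have "0 < \<dots>" using assms by simp
  finally show ?thesis by simp
qed

lemma fx_reflect: "- fx a b c d \<mu> x r = fx d c b a \<mu> (1 - x) (1 - r)"
  unfolding fx_def by (simp add: algebra_simps)

lemma fr_reflect: "0 < \<theta> \<Longrightarrow> - fr \<theta> x r = \<theta> * fr (1 / \<theta>) (1 - x) (1 - r)"
  unfolding fr_def by (simp add: field_simps)

lemma fx_ge_source:
  assumes "0 \<le> a" "0 \<le> b" "0 \<le> c" "0 \<le> d" "x \<in> {0..1}" "r \<in> {0..1}"
  shows "\<mu> - (a + b + c + d + 2 * \<mu>) * x \<le> fx a b c d \<mu> x r"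
proof -
  define S where "S = (1 - r) * (x * a + (1 - x) * b) - r * (x * c + (1 - x) * d)"
  have "x * c + (1 - x) * d \<le> c + d"
    using assms mult_left_le_one_le[of c x] mult_left_le_one_le[of d "1 - x"] by auto
  then have "r * (x * c + (1 - x) * d) \<le> a + b + c + d"
    using assms mult_left_le_one_le[of "x * c + (1 - x) * d" r] by auto
  moreover have "0 \<le> (1 - r) * (x * a + (1 - x) * b)"
    using assms by (intro mult_nonneg_nonneg add_nonneg_nonneg) auto
  ultimately have "- (a + b + c + d) \<le> S" unfolding S_def by linarith
  then have "- (a + b + c + d) * (x * (1 - x)) \<le> S * (x * (1 - x))"
    using assms by (intro mult_right_mono) auto
  moreover have "(a + b + c + d) * (x * (1 - x)) \<le> (a + b + c + d) * x"
    using assms by (intro mult_left_mono) (auto simp: algebra_simps)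
  moreover have "fx a b c d \<mu> x r = S * (x * (1 - x)) + \<mu> * (1 - 2 * x)"
    unfolding fx_def S_def by (simp add: algebra_simps)
  ultimately show ?thesis by (simp add: algebra_simps)
qed

lemma fx_ge_edge_drift:
  assumes "0 \<le> a" "0 \<le> b" "0 \<le> c" "0 \<le> d" "x \<in> {0..1}" "r \<in> {0..1}"
  shows "edge_drift a b \<mu> x - (a + b + c + d) * r \<le> fx a b c d \<mu> x r"
proof -
  define P where "P = x * a + (1 - x) * b + (x * c + (1 - x) * d)"
  have "P \<le> a + b + c + d"
    using assms mult_left_le_one_le[of a x] mult_left_le_one_le[of b "1 - x"]
      mult_left_le_one_le[of c x] mult_left_le_one_le[of d "1 - x"]
    unfolding P_def by auto
  moreover have "0 \<le> P" unfolding P_def using assms by auto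
  ultimately have "x * (1 - x) * (r * P) \<le> r * (a + b + c + d)"
    using assms mult_left_le_one_le[of "r * P" "x * (1 - x)"] mult_left_mono[of P _ r]
    by (smt (verit) atLeastAtMost_iff mult_le_one mult_nonneg_nonneg)
  moreover have "fx a b c d \<mu> x r = edge_drift a b \<mu> x - x * (1 - x) * (r * P)"
    unfolding fx_def edge_drift_def P_def by (simp add: algebra_simps)
  ultimately show ?thesis by (simp add: algebra_simps)
qed

lemma fr_ge_neg:
  assumes "0 \<le> \<theta>" "x \<in> {0..1}" "r \<in> {0..1}"
  shows "- r \<le> fr \<theta> x r"
proof -
  have "- 1 \<le> (1 - r) * (\<theta> * x - (1 - x))"
  proof (cases "0 \<le> \<theta> * x - (1 - x)")
    case True
    then have "0 \<le> (1 - r) * (\<theta> * x - (1 - x))"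
      using assms by (intro mult_nonneg_nonneg) auto
    then show ?thesis by linarith
  next
    case False
    then have "1 * (\<theta> * x - (1 - x)) \<le> (1 - r) * (\<theta> * x - (1 - x))"
      using assms by (intro mult_right_mono_neg) auto
    then have "\<theta> * x - (1 - x) \<le> (1 - r) * (\<theta> * x - (1 - x))" by simp
    moreover have "0 \<le> \<theta> * x" "0 \<le> x" using assms by auto
    ultimately show ?thesis by linarith
  qed
  then have "r * (- 1) \<le> r * ((1 - r) * (\<theta> * x - (1 - x)))"
    using assms by (intro mult_left_mono) auto
  then show ?thesis unfolding fr_def by (simp add: algebra_simps)
qed

lemma fr_ge_beyond:
  assumes "0 \<le> \<theta>" "0 \<le> r" "r \<le> \<eta>" "\<eta> \<le> 1" "X \<le> x" "1 \<le> (\<theta> + 1) * X"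
  shows "(1 - \<eta>) * ((\<theta> + 1) * X - 1) * r \<le> fr \<theta> x r"
proof -
  have "(\<theta> + 1) * X \<le> (\<theta> + 1) * x" using assms by (intro mult_left_mono) auto
  then have "(1 - \<eta>) * ((\<theta> + 1) * X - 1) \<le> (1 - r) * (\<theta> * x - (1 - x))"
    using assms by (intro mult_mono) (auto simp: algebra_simps)
  then have "r * ((1 - \<eta>) * ((\<theta> + 1) * X - 1)) \<le> r * ((1 - r) * (\<theta> * x - (1 - x)))"
    using assms by (intro mult_left_mono) auto
  then show ?thesis unfolding fr_def by (simp add: algebra_simps)
qed

(* is_solution with the r-equation sped up by \<kappa>; unlike is_solution, this class is closed
   under the reflection (x, r) \<mapsto> (1 - x, 1 - r). *)
definition scaled_solution ::
  "real \<Rightarrow> real \<Rightarrow> real \<Rightarrow> real \<Rightarrow> real \<Rightarrow> real \<Rightarrow> real \<Rightarrow> (real \<Rightarrow> real) \<Rightarrow> (real \<Rightarrow> real) \<Rightarrow> bool" where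
  "scaled_solution A B C D \<phi> \<kappa> \<mu> y s \<longleftrightarrow>
     (\<forall>t\<ge>0. (y has_real_derivative fx A B C D \<mu> (y t) (s t)) (at t within {0..})
            \<and> (s has_real_derivative \<kappa> * fr \<phi> (y t) (s t)) (at t within {0..}))"

lemma is_solution_iff_scaled_solution:
  "is_solution a b c d \<theta> \<mu> x r \<longleftrightarrow> scaled_solution a b c d \<theta> 1 \<mu> x r"
  unfolding is_solution_def scaled_solution_def by simp

lemma scaled_solution_reflect:
  assumes "scaled_solution A B C D \<phi> \<kappa> \<mu> y s" "0 < \<phi>"
  shows "scaled_solution D C B A (1 / \<phi>) (\<kappa> * \<phi>) \<mu> (\<lambda>t. 1 - y t) (\<lambda>t. 1 - s t)"
  using assms unfolding scaled_solution_def
  by (auto intro!: derivative_eq_intros simp: mult.assoc simp flip: fx_reflect fr_reflect[OF assms(2)])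

lemma first_exit_time:
  fixes p :: "real \<Rightarrow> 'a::topological_space"
  assumes "continuous_on {0..} p" "open U" "0 \<le> t" "p t \<notin> U"
  obtains t1 where "0 \<le> t1" "p t1 \<notin> U" "\<And>u. 0 \<le> u \<Longrightarrow> u < t1 \<Longrightarrow> p u \<in> U"
proof -
  define S where "S = {0..} \<inter> p -` (- U)"
  have "closed S"
    unfolding S_def using assms(1,2) by (intro continuous_closed_preimage) auto
  moreover have "S \<noteq> {}" "bdd_below S"
    using assms(3,4) unfolding S_def by (auto intro: bdd_belowI[of _ 0])
  ultimately have "Inf S \<in> S" by (intro closed_contains_Inf)
  moreover have "p u \<in> U" if "0 \<le> u" "u < Inf S" for u
    using cInf_lower[OF _ \<open>bdd_below S\<close>, of u] that unfolding S_def by force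
  ultimately show ?thesis using that unfolding S_def by auto
qed

lemma scaled_solution_pos_until:
  assumes "0 \<le> A" "0 \<le> B" "0 \<le> C" "0 \<le> D" "0 \<le> \<mu>" "0 \<le> \<phi>" "0 \<le> \<kappa>"
    and sol: "scaled_solution A B C D \<phi> \<kappa> \<mu> y s" and "0 < y 0" "0 < s 0" "0 \<le> t"
    and bounded: "\<And>u. 0 \<le> u \<Longrightarrow> u < t \<Longrightarrow> y u \<in> {0..1} \<and> s u \<in> {0..1}"
  shows "0 < y t \<and> 0 < s t"
proof -
  have pos: "0 < f t"
    if "\<forall>u\<ge>0. (f has_real_derivative f' u) (at u within {0..})" "0 < f 0"
      and "\<And>u. 0 < u \<Longrightarrow> u < t \<Longrightarrow> k * f u \<le> f' u" for f f' :: "real \<Rightarrow> real" and k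
    using exp_lower_bound_of_deriv_ge[OF that(1) order_refl \<open>0 \<le> t\<close>] that(2,3)
    by (smt (verit) exp_gt_zero mult_pos_pos)
  have "0 < y t"
  proof (rule pos[where k = "- (A + B + C + D + 2 * \<mu>)"])
    fix u assume "0 < u" "u < t"
    then have "\<mu> - (A + B + C + D + 2 * \<mu>) * y u \<le> fx A B C D \<mu> (y u) (s u)"
      using fx_ge_source[OF assms(1-4)] bounded[of u] by auto
    then show "- (A + B + C + D + 2 * \<mu>) * y u \<le> fx A B C D \<mu> (y u) (s u)"
      using \<open>0 \<le> \<mu>\<close> by (simp only: mult_minus_left)
  qed (use sol \<open>0 < y 0\<close> in \<open>auto simp: scaled_solution_def\<close>)
  moreover have "0 < s t"
  proof (rule pos[where k = "- \<kappa>"])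
    fix u assume "0 < u" "u < t"
    then have "- s u \<le> fr \<phi> (y u) (s u)"
      using fr_ge_neg[OF \<open>0 \<le> \<phi>\<close>] bounded[of u] by auto
    then show "- \<kappa> * s u \<le> \<kappa> * fr \<phi> (y u) (s u)"
      using mult_left_mono[OF _ \<open>0 \<le> \<kappa>\<close>] by fastforce
  qed (use sol \<open>0 < s 0\<close> in \<open>auto simp: scaled_solution_def\<close>)
  ultimately show ?thesis ..
qed

lemma scaled_solution_stays_interior:
  assumes "0 \<le> A" "0 \<le> B" "0 \<le> C" "0 \<le> D" "0 \<le> \<mu>" "0 < \<phi>" "0 \<le> \<kappa>"
    and sol: "scaled_solution A B C D \<phi> \<kappa> \<mu> y s" and "y 0 \<in> {0<..<1}" "s 0 \<in> {0<..<1}"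
  shows "\<forall>t\<ge>0. y t \<in> {0<..<1} \<and> s t \<in> {0<..<1}"
proof (rule ccontr)
  assume "\<not> ?thesis"
  then obtain t where t: "0 \<le> t" "(y t, s t) \<notin> {0<..<1} \<times> {0<..<1}" by auto
  have "continuous_on {0..} (\<lambda>t. (y t, s t))"
    using sol unfolding scaled_solution_def
    by (intro continuous_on_Pair continuous_on_atLeast_of_DERIV) auto
  moreover have "open ({0<..<1 :: real} \<times> {0<..<1 :: real})" by (intro open_Times) auto
  ultimately obtain t1 where t1: "0 \<le> t1" "(y t1, s t1) \<notin> {0<..<1} \<times> {0<..<1}"
    and before: "\<And>u. 0 \<le> u \<Longrightarrow> u < t1 \<Longrightarrow> (y u, s u) \<in> {0<..<1} \<times> {0<..<1}"
    using first_exit_time t by blast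
  have "0 < y t1 \<and> 0 < s t1"
    by (rule scaled_solution_pos_until[OF assms(1-5) less_imp_le[OF assms(6)] assms(7) sol])
      (use assms(9,10) t1(1) before in \<open>auto simp: less_imp_le\<close>)
  moreover have "0 < 1 - y t1 \<and> 0 < 1 - s t1"
    by (rule scaled_solution_pos_until[OF assms(4,3,2,1,5) _ _ scaled_solution_reflect[OF sol assms(6)]])
      (use assms(6,7,9,10) t1(1) before in \<open>auto simp: less_imp_le\<close>)
  ultimately show False using t1(2) by auto
qed

lemma eventually_away_from_left_edge:
  assumes "0 \<le> A" "0 \<le> B" "0 \<le> C" "0 \<le> D" "0 < \<mu>" "0 < \<phi>" "0 \<le> \<kappa>"
    and sol: "scaled_solution A B C D \<phi> \<kappa> \<mu> y s" and "y 0 \<in> {0<..<1}" "s 0 \<in> {0<..<1}"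
  shows "eventually (\<lambda>t. \<mu> / (2 * (A + B + C + D + 2 * \<mu>)) \<le> y t) at_top"
proof -
  define L where "L = A + B + C + D + 2 * \<mu>"
  have "0 < L" using assms unfolding L_def by simp
  have bounded: "y t \<in> {0..1}" "s t \<in> {0..1}" if "0 \<le> t" for t
    using scaled_solution_stays_interior[OF assms(1-4) _ assms(6,7) sol assms(9,10)] assms(5) that
    by auto
  show ?thesis unfolding L_def[symmetric]
  proof (rule eventually_ge_of_deriv_ge_below)
    fix t assume "0 \<le> t" "y t < \<mu> / (2 * L)"
    then have "L * y t \<le> \<mu> / 2"
      using \<open>0 < L\<close> by (simp add: field_simps)
    moreover have "\<mu> - L * y t \<le> fx A B C D \<mu> (y t) (s t)"
      using fx_ge_source[OF assms(1-4)] bounded[OF \<open>0 \<le> t\<close>] unfolding L_def by blast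
    ultimately show "\<mu> / 2 \<le> fx A B C D \<mu> (y t) (s t)" by linarith
  qed (use sol bounded \<open>0 < L\<close> assms(5) in \<open>auto simp: scaled_solution_def\<close>)
qed

lemma bottom_edge_trapping_strip:
  assumes "0 < A" "0 < B" "0 \<le> C" "0 \<le> D" "0 < \<phi>" "0 < \<kappa>"
    and X: "1 / (1 + \<phi>) < X" and "0 < m" and m: "\<And>y. y \<in> {0..X} \<Longrightarrow> m \<le> edge_drift A B \<mu> y"
    and \<eta>: "0 < \<eta>" "\<eta> \<le> 1/2" "(A + B + C + D) * \<eta> \<le> m / 2"
    and sol: "scaled_solution A B C D \<phi> \<kappa> \<mu> y s"
    and interior: "\<And>t. 0 \<le> t \<Longrightarrow> y t \<in> {0<..<1} \<and> s t \<in> {0<..<1}"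
  shows "trapping_strip y s (\<lambda>t. fx A B C D \<mu> (y t) (s t)) (\<lambda>t. \<kappa> * fr \<phi> (y t) (s t))
      \<eta> (m / 2) (\<kappa> * ((1 - \<eta>) * ((\<phi> + 1) * X - 1))) \<kappa> X"
proof
  have "1 < (\<phi> + 1) * X" using X assms(5) by (simp add: field_simps)
  then show "0 < \<kappa> * ((1 - \<eta>) * ((\<phi> + 1) * X - 1))" using \<eta> assms(6) by simp
  show "0 \<le> X" using X assms(5) by (smt (verit) divide_pos_pos)
  have bounded: "y t \<in> {0..1}" "s t \<in> {0..1}" if "0 \<le> t" for t
    using interior[OF that] by auto
  show "0 < s t" "0 \<le> y t" if "0 \<le> t" for t
    using interior[OF that] by auto
  show "- \<kappa> * s t \<le> \<kappa> * fr \<phi> (y t) (s t)" if "0 \<le> t" for t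
    using mult_left_mono[OF fr_ge_neg[OF _ bounded[OF that]], of \<phi> \<kappa>] assms(5,6)
    by (simp add: minus_mult_commute)
  show "m / 2 \<le> fx A B C D \<mu> (y t) (s t)" if "0 \<le> t" "s t \<le> \<eta>" "y t < X" for t
  proof -
    have "m - (A + B + C + D) * s t \<le> fx A B C D \<mu> (y t) (s t)"
      using fx_ge_edge_drift[of A B C D "y t" "s t" \<mu>] m[of "y t"] bounded[OF that(1)] that(3)
        assms(1-4) by force
    moreover have "(A + B + C + D) * s t \<le> (A + B + C + D) * \<eta>"
      using that(2) assms(1-4) by (intro mult_left_mono) auto
    ultimately show ?thesis using \<eta> by linarith
  qed
  show "\<kappa> * ((1 - \<eta>) * ((\<phi> + 1) * X - 1)) * s t \<le> \<kappa> * fr \<phi> (y t) (s t)"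
    if "0 \<le> t" "s t \<le> \<eta>" "X \<le> y t" for t
  proof -
    have "(1 - \<eta>) * ((\<phi> + 1) * X - 1) * s t \<le> fr \<phi> (y t) (s t)"
      using fr_ge_beyond[of \<phi> "s t" \<eta> X "y t"] \<eta> bounded[OF that(1)] that(2,3) assms(5)
        \<open>1 < (\<phi> + 1) * X\<close> by auto
    then show ?thesis using assms(6) by (simp add: mult.assoc mult_left_mono)
  qed
qed (use sol \<eta> \<open>0 < m\<close> assms(6) in \<open>auto simp: scaled_solution_def\<close>)

lemma eventually_away_from_bottom_edge:
  assumes "0 < A" "0 < B" "0 \<le> C" "0 \<le> D" "0 < \<mu>" "0 < \<phi>" "0 < \<kappa>"
    and "0 < edge_drift A B \<mu> (1 / (1 + \<phi>))"
  obtains \<delta> where "0 < \<delta>"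
    "\<And>y s. scaled_solution A B C D \<phi> \<kappa> \<mu> y s \<Longrightarrow> y 0 \<in> {0<..<1} \<Longrightarrow> s 0 \<in> {0<..<1} \<Longrightarrow>
      eventually (\<lambda>t. \<delta> \<le> s t) at_top"
proof -
  obtain X m where X: "1 / (1 + \<phi>) < X" "X < 1" "0 < m"
    and m: "\<And>y. y \<in> {0..X} \<Longrightarrow> m \<le> edge_drift A B \<mu> y"
    using edge_drift_bounded_below_beyond[OF assms(1,2,5) _ _ assms(8)] assms(6) by auto
  define M where "M = A + B + C + D"
  \<comment> \<open>below height \<eta> the coupling to r costs at most half of the edge drift\<close>
  define \<eta> where "\<eta> = min (1/2) (m / (2 * M))"
  have "0 < M" using assms(1-4) unfolding M_def by simp
  have "M * \<eta> \<le> M * (m / (2 * M))"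
    using \<open>0 < M\<close> unfolding \<eta>_def by (intro mult_left_mono) auto
  also have "\<dots> = m / 2" using \<open>0 < M\<close> by simp
  finally have "(A + B + C + D) * \<eta> \<le> m / 2" unfolding M_def .
  moreover have "0 < \<eta>" "\<eta> \<le> 1/2"
    using \<open>0 < M\<close> \<open>0 < m\<close> unfolding \<eta>_def by auto
  ultimately have \<eta>: "0 < \<eta>" "\<eta> \<le> 1/2" "(A + B + C + D) * \<eta> \<le> m / 2" by auto
  show ?thesis
  proof (rule that)
    show "0 < \<eta> * exp (- \<kappa> * (X / (m / 2)))" using \<eta> by simp
    fix y s assume sol: "scaled_solution A B C D \<phi> \<kappa> \<mu> y s" and "y 0 \<in> {0<..<1}" "s 0 \<in> {0<..<1}"
    then have interior: "\<And>t. 0 \<le> t \<Longrightarrow> y t \<in> {0<..<1} \<and> s t \<in> {0<..<1}"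
      using scaled_solution_stays_interior[of A B C D \<mu> \<phi> \<kappa> y s] assms by auto
    show "eventually (\<lambda>t. \<eta> * exp (- \<kappa> * (X / (m / 2))) \<le> s t) at_top"
      by (rule trapping_strip.eventually_above
          [OF bottom_edge_trapping_strip[OF assms(1-4,6,7) X(1,3) m \<eta> sol interior]])
  qed
qed

lemma infdist_square_boundary_ge:
  assumes "\<delta> \<le> x" "\<delta> \<le> 1 - x" "\<delta> \<le> r" "\<delta> \<le> 1 - r"
  shows "\<delta> \<le> infdist (x, r) square_boundary"
proof -
  have ne: "square_boundary \<noteq> {}" unfolding square_boundary_def by force
  have "\<delta> \<le> dist (x, r) q" if "q \<in> square_boundary" for q
    using that dist_fst_le[of "(x, r)" q] dist_snd_le[of "(x, r)" q] assms
    unfolding square_boundary_def by (auto simp: dist_real_def)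
  then show ?thesis unfolding infdist_notempty[OF ne] by (intro cINF_greatest ne)
qed

lemma boundary_repellingI:
  assumes "0 < \<delta>"
    and "\<And>x r. is_solution a b c d \<theta> \<mu> x r \<Longrightarrow> x 0 \<in> {0<..<1} \<Longrightarrow> r 0 \<in> {0<..<1} \<Longrightarrow>
      eventually (\<lambda>t. \<delta> \<le> x t \<and> \<delta> \<le> 1 - x t \<and> \<delta> \<le> r t \<and> \<delta> \<le> 1 - r t) at_top"
  shows "boundary_repelling a b c d \<theta> \<mu>"
  unfolding boundary_repelling_def
proof (intro exI[of _ "\<delta> / 2"] conjI allI impI)
  fix x r assume "is_solution a b c d \<theta> \<mu> x r" "x 0 \<in> {0<..<1}" "r 0 \<in> {0<..<1}"
  then have "eventually (\<lambda>t. \<delta> \<le> x t \<and> \<delta> \<le> 1 - x t \<and> \<delta> \<le> r t \<and> \<delta> \<le> 1 - r t) at_top"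
    by (rule assms(2))
  then have ev: "eventually (\<lambda>t. ereal \<delta> \<le> ereal (infdist (x t, r t) square_boundary)) at_top"
    by (rule eventually_mono) (simp add: infdist_square_boundary_ge)
  have "ereal (\<delta> / 2) < ereal \<delta>" using \<open>0 < \<delta>\<close> by simp
  also have "\<dots> \<le> Liminf at_top (\<lambda>t. ereal (infdist (x t, r t) square_boundary))"
    using ev by (rule Liminf_bounded)
  finally show "ereal (\<delta> / 2) < Liminf at_top (\<lambda>t. ereal (infdist (x t, r t) square_boundary))" .
qed (use \<open>0 < \<delta>\<close> in simp)

lemma eventually_away_from_vertical_edges:
  fixes a b c d \<theta> \<mu> :: real
  assumes "0 \<le> a" "0 \<le> b" "0 \<le> c" "0 \<le> d" "0 < \<theta>" "0 < \<mu>"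
    and "is_solution a b c d \<theta> \<mu> x r" "x 0 \<in> {0<..<1}" "r 0 \<in> {0<..<1}"
  shows "eventually (\<lambda>t. \<mu> / (2 * (a + b + c + d + 2 * \<mu>)) \<le> x t
      \<and> \<mu> / (2 * (a + b + c + d + 2 * \<mu>)) \<le> 1 - x t) at_top"
proof -
  have sol: "scaled_solution a b c d \<theta> 1 \<mu> x r"
    using assms(7) by (simp add: is_solution_iff_scaled_solution)
  have "eventually (\<lambda>t. \<mu> / (2 * (a + b + c + d + 2 * \<mu>)) \<le> x t) at_top"
    by (rule eventually_away_from_left_edge[OF assms(1-4,6,5) _ sol assms(8,9)]) simp
  moreover have "eventually (\<lambda>t. \<mu> / (2 * (d + c + b + a + 2 * \<mu>)) \<le> 1 - x t) at_top"
    by (rule eventually_away_from_left_edge[OF assms(4,3,2,1,6) _ _ scaled_solution_reflect[OF sol assms(5)]])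
      (use assms(5,8,9) in auto)
  ultimately show ?thesis by eventually_elim (simp add: ac_simps)
qed

lemma eventually_away_from_horizontal_edges:
  fixes a b c d \<theta> \<mu> :: real
  assumes "0 < a" "0 < b" "0 < c" "0 < d" "0 < \<theta>" "0 < \<mu>" "\<mu> \<le> 1"
    and "- (\<theta> * a + \<theta>^2 * b) < (\<theta> - 1) * (\<theta> + 1)^2"
    and "(\<theta> - 1) * (\<theta> + 1)^2 < \<theta> * c + \<theta>^2 * d"
  obtains \<delta> where "0 < \<delta>"
    "\<And>x r. is_solution a b c d \<theta> \<mu> x r \<Longrightarrow> x 0 \<in> {0<..<1} \<Longrightarrow> r 0 \<in> {0<..<1} \<Longrightarrow>
      eventually (\<lambda>t. \<delta> \<le> r t \<and> \<delta> \<le> 1 - r t) at_top"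
proof -
  have "0 < edge_drift a b \<mu> (1 / (1 + \<theta>))"
    using edge_drift_pos_at_balance[OF assms(1,2,5,6,7,8)] .
  then obtain \<delta>\<^sub>b where "0 < \<delta>\<^sub>b" and \<delta>\<^sub>b: "\<And>y s. scaled_solution a b c d \<theta> 1 \<mu> y s \<Longrightarrow>
      y 0 \<in> {0<..<1} \<Longrightarrow> s 0 \<in> {0<..<1} \<Longrightarrow> eventually (\<lambda>t. \<delta>\<^sub>b \<le> s t) at_top"
    using eventually_away_from_bottom_edge[OF assms(1,2) less_imp_le[OF assms(3)] less_imp_le[OF assms(4)]
        assms(6,5) zero_less_one] by blast
  have "0 < 1 / \<theta>" using assms(5) by simp
  then have "0 < edge_drift d c \<mu> (1 / (1 + 1 / \<theta>))"
    using edge_drift_pos_at_balance[OF assms(4,3) _ assms(6,7) balance_reflect[OF assms(5,9)]] by blast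
  then obtain \<delta>\<^sub>t where "0 < \<delta>\<^sub>t" and \<delta>\<^sub>t: "\<And>y s. scaled_solution d c b a (1 / \<theta>) (1 * \<theta>) \<mu> y s \<Longrightarrow>
      y 0 \<in> {0<..<1} \<Longrightarrow> s 0 \<in> {0<..<1} \<Longrightarrow> eventually (\<lambda>t. \<delta>\<^sub>t \<le> s t) at_top"
    using eventually_away_from_bottom_edge[OF assms(4,3) less_imp_le[OF assms(2)] less_imp_le[OF assms(1)]
        assms(6) \<open>0 < 1 / \<theta>\<close>, of "1 * \<theta>"] assms(5) by auto
  show ?thesis
  proof (rule that[of "min \<delta>\<^sub>b \<delta>\<^sub>t"])
    show "0 < min \<delta>\<^sub>b \<delta>\<^sub>t" using \<open>0 < \<delta>\<^sub>b\<close> \<open>0 < \<delta>\<^sub>t\<close> by simp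
    fix x r assume "is_solution a b c d \<theta> \<mu> x r" and x0: "x 0 \<in> {0<..<1}" and r0: "r 0 \<in> {0<..<1}"
    then have sol: "scaled_solution a b c d \<theta> 1 \<mu> x r"
      by (simp add: is_solution_iff_scaled_solution)
    have "eventually (\<lambda>t. \<delta>\<^sub>b \<le> r t) at_top"
      using \<delta>\<^sub>b[OF sol x0 r0] .
    moreover have "eventually (\<lambda>t. \<delta>\<^sub>t \<le> 1 - r t) at_top"
      using \<delta>\<^sub>t[OF scaled_solution_reflect[OF sol assms(5)]] x0 r0 by simp
    ultimately show "eventually (\<lambda>t. min \<delta>\<^sub>b \<delta>\<^sub>t \<le> r t \<and> min \<delta>\<^sub>b \<delta>\<^sub>t \<le> 1 - r t) at_top"
      by eventually_elim auto
  qed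
qed

theorem lemma13:
  fixes a b c d \<theta> :: real
  assumes "a > 0" "b > 0" "c > 0" "d > 0" "\<theta> > 0"
    and "- (\<theta> * a + \<theta>^2 * b) < (\<theta> - 1) * (\<theta> + 1)^2"
    and "(\<theta> - 1) * (\<theta> + 1)^2 < \<theta> * c + \<theta>^2 * d"
  shows "\<forall>\<mu>\<in>{0<..1}. boundary_repelling a b c d \<theta> \<mu>"
proof
  fix \<mu> :: real assume "\<mu> \<in> {0<..1}"
  then obtain \<delta> where "0 < \<delta>" and \<delta>: "\<And>x r. is_solution a b c d \<theta> \<mu> x r \<Longrightarrow>
      x 0 \<in> {0<..<1} \<Longrightarrow> r 0 \<in> {0<..<1} \<Longrightarrow> eventually (\<lambda>t. \<delta> \<le> r t \<and> \<delta> \<le> 1 - r t) at_top"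
    using eventually_away_from_horizontal_edges[OF assms(1-5) _ _ assms(6,7)] by auto
  define \<epsilon> where "\<epsilon> = \<mu> / (2 * (a + b + c + d + 2 * \<mu>))"
  show "boundary_repelling a b c d \<theta> \<mu>"
  proof (rule boundary_repellingI[of "min \<epsilon> \<delta>"])
    show "0 < min \<epsilon> \<delta>" using \<open>0 < \<delta>\<close> \<open>\<mu> \<in> {0<..1}\<close> assms by (simp add: \<epsilon>_def)
    fix x r assume sol: "is_solution a b c d \<theta> \<mu> x r" "x 0 \<in> {0<..<1}" "r 0 \<in> {0<..<1}"
    have "eventually (\<lambda>t. \<epsilon> \<le> x t \<and> \<epsilon> \<le> 1 - x t) at_top"
      unfolding \<epsilon>_def using assms \<open>\<mu> \<in> {0<..1}\<close>
      by (intro eventually_away_from_vertical_edges[OF _ _ _ _ _ _ sol]) auto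
    with \<delta>[OF sol] show "eventually (\<lambda>t. min \<epsilon> \<delta> \<le> x t \<and> min \<epsilon> \<delta> \<le> 1 - x t
        \<and> min \<epsilon> \<delta> \<le> r t \<and> min \<epsilon> \<delta> \<le> 1 - r t) at_top"
      by eventually_elim auto
  qed
qed

end
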